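(* Let $a=(a_i)_{i\in\mathbb Z}$ be any sequence of complex numbers. If $\mu,\lambda$ are Young diagrams with $\mu\not\subseteq\lambda$, then $s_{\mu;a}(x(\lambda);y(\lambda))=0$.
   Context: $\Lambda$ is the algebra of symmetric functions over $\mathbb C$ with complete homogeneous $h_k$, elementary $e_k$, power sums $\mathbf p_k$. For a sequence $a$ define $h_{k;a}=\sum_{i=1}^k(-1)^{k-i}e_{k-i}(a_1,\dots,a_{k-1})h_i$ ($k\ge1$), $h_{0;a}=1$, $h_{k;a}=0$ ($k<0$); $(\tau^ra)_i=a_{i+r}$; $s_{\mu;a}=\det[h_{\mu_i-i+j;\,\tau^{1-j}a}]_{i,j=1}^N$ for any $N\ge\ell(\mu)$. Dual sequence: $\widehat a_i=-a_{1-i}$. Each $f\in\Lambda$ is evaluated at $(x;y)\in\mathbb C^d\times\mathbb C^d$ via $\mathbf p_k\mapsto\sum_ix_i^k+(-1)^{k-1}\sum_jy_j^k$. For a nonempty diagram $\lambda=(p_1,\dots,p_d\mid q_1,\dots,q_d)$ in Frobenius notation ($p_i=\lambda_i-i$, $q_i=\lambda'_i-i$, $d$ the number of diagonal boxes), set $(x(\lambda);y(\lambda))=(a_{p_1+1},\dots,a_{p_d+1};\widehat a_{q_1+1},\dots,\widehat a_{q_d+1})\in\mathbb C^d\times\mathbb C^d$; and $(x(\varnothing);y(\varnothing))=(0;0)$. *)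

theory Defs
  imports Complex_Main "Jordan_Normal_Form.Determinant"
begin

definition young :: "nat list \<Rightarrow> bool" where
  "young \<mu> \<longleftrightarrow> sorted_wrt (\<ge>) \<mu> \<and> 0 \<notin> set \<mu>"

text \<open>Row lengths, 1-based: part \<mu> i = \<mu>_i (0 beyond the length).\<close>
definition part :: "nat list \<Rightarrow> nat \<Rightarrow> nat" where
  "part \<mu> i = (if 1 \<le> i \<and> i \<le> length \<mu> then \<mu> ! (i - 1) else 0)"

definition conjpart :: "nat list \<Rightarrow> nat \<Rightarrow> nat" where
  "conjpart lam i = card {j. 1 \<le> j \<and> j \<le> length lam \<and> i \<le> part lam j}"

definition diagram_subset :: "nat list \<Rightarrow> nat list \<Rightarrow> bool" where
  "diagram_subset \<mu> lam \<longleftrightarrow> (\<forall>i. part \<mu> i \<le> part lam i)"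

definition diag :: "nat list \<Rightarrow> nat" where
  "diag lam = card {i. 1 \<le> i \<and> i \<le> length lam \<and> i \<le> part lam i}"

definition shift :: "int \<Rightarrow> (int \<Rightarrow> complex) \<Rightarrow> int \<Rightarrow> complex" where
  "shift r a = (\<lambda>i. a (i + r))"

definition dual_seq :: "(int \<Rightarrow> complex) \<Rightarrow> int \<Rightarrow> complex" where
  "dual_seq a = (\<lambda>i. - a (1 - i))"

definition esym :: "nat \<Rightarrow> nat \<Rightarrow> (int \<Rightarrow> complex) \<Rightarrow> complex" where
  "esym m n a = (\<Sum>S\<in>{S. S \<subseteq> {1..n} \<and> card S = m}. \<Prod>j\<in>S. a (int j))"

text \<open>Image of the power sum p_k under the evaluation at (x;y).\<close>
definition psum_ev :: "complex list \<Rightarrow> complex list \<Rightarrow> nat \<Rightarrow> complex" where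
  "psum_ev xs ys k = (\<Sum>x\<leftarrow>xs. x ^ k) + (-1) ^ (k - 1) * (\<Sum>y\<leftarrow>ys. y ^ k)"

text \<open>Images of h_0,...,h_n, determined from the power sums by Newton's identities
  k h_k = sum_{i=1}^k p_i h_{k-i} (which hold in Lambda).\<close>
fun hlist_ev :: "complex list \<Rightarrow> complex list \<Rightarrow> nat \<Rightarrow> complex list" where
  "hlist_ev xs ys 0 = [1]"
| "hlist_ev xs ys (Suc n) = hlist_ev xs ys n @
     [(\<Sum>i=1..Suc n. psum_ev xs ys i * (hlist_ev xs ys n ! (Suc n - i))) / of_nat (Suc n)]"

definition h_ev :: "complex list \<Rightarrow> complex list \<Rightarrow> nat \<Rightarrow> complex" where
  "h_ev xs ys k = hlist_ev xs ys k ! k"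

text \<open>Image of h_{k;a} at (x;y).\<close>
definition hfac_ev :: "(int \<Rightarrow> complex) \<Rightarrow> int \<Rightarrow> complex list \<Rightarrow> complex list \<Rightarrow> complex" where
  "hfac_ev a k xs ys =
     (if k < 0 then 0 else if k = 0 then 1 else
      (\<Sum>i=1..nat k. (-1) ^ (nat k - i) * esym (nat k - i) (nat k - 1) a * h_ev xs ys i))"

text \<open>Image of s_{\<mu>;a} at (x;y): since evaluation is a ring homomorphism, it is the
  determinant of the evaluated entries (taking N = length \<mu>).\<close>
definition schur_ev :: "nat list \<Rightarrow> (int \<Rightarrow> complex) \<Rightarrow> complex list \<Rightarrow> complex list \<Rightarrow> complex" where
  "schur_ev \<mu> a xs ys =
     det (mat (length \<mu>) (length \<mu>)
       (\<lambda>(i, j). hfac_ev (shift (1 - int (Suc j)) a)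
                   (int (part \<mu> (Suc i)) - int (Suc i) + int (Suc j)) xs ys))"

text \<open>(x(\<lambda>); y(\<lambda>)) via Frobenius coordinates p_i = \<lambda>_i - i, q_i = \<lambda>'_i - i.\<close>
definition xpt :: "(int \<Rightarrow> complex) \<Rightarrow> nat list \<Rightarrow> complex list" where
  "xpt a lam = map (\<lambda>i. a (int (part lam i - i) + 1)) [1..<diag lam + 1]"

definition ypt :: "(int \<Rightarrow> complex) \<Rightarrow> nat list \<Rightarrow> complex list" where
  "ypt a lam = map (\<lambda>i. dual_seq a (int (conjpart lam i - i) + 1)) [1..<diag lam + 1]"

end

theory Submission
  imports Defs "HOL-Computational_Algebra.Formal_Power_Series"
begin

(* The evaluated h_k are the coefficients of H(t) = prod_j (1 + y_j t) / prod_i (1 - x_i t), and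
   h_{k;a} is the value at prod_{j<k} (u - a_j) of the linear functional u^n |-> [t^(n+1)] H.
   By the complementarity of {p_i + 1} and {-q_i} inside {1-M..0}, at (x(lambda); y(lambda)) the
   series becomes prod_{m=1-M}^0 (1 - a_m t) / prod_{l=1}^M (1 - a_{lambda_l - l + 1} t).
   If mu_r > lambda_r, the polynomials behind the first r rows of the determinant all contain the
   factors u - a_{lambda_l - l + 1} for l >= r; after cancelling them, the functional kills the
   multiples of a polynomial of degree r - 1, so these r rows lie in an (r - 1)-dimensional space
   and the determinant vanishes. *)

section \<open>Generating series of the complete symmetric functions\<close>

definition fps_geometric :: "'a::comm_ring_1 \<Rightarrow> 'a fps" where
  "fps_geometric c = Abs_fps (\<lambda>n. c ^ n)"

lemma fps_geometric_mult: "fps_geometric c * (1 - fps_const c * fps_X) = 1"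
proof (rule fps_ext)
  fix n
  have "fps_geometric c * (1 - fps_const c * fps_X)
      = fps_geometric c - fps_X * (fps_const c * fps_geometric c)"
    by (simp add: algebra_simps)
  then show "fps_nth (fps_geometric c * (1 - fps_const c * fps_X)) n = fps_nth 1 n"
    by (cases n) (simp_all add: fps_geometric_def)
qed

definition has_xlogderiv :: "'a::comm_ring_1 fps \<Rightarrow> 'a fps \<Rightarrow> bool" where
  "has_xlogderiv F Q \<longleftrightarrow> fps_X * fps_deriv F = F * Q"

lemma has_xlogderiv_mult:
  "has_xlogderiv F Q \<Longrightarrow> has_xlogderiv G R \<Longrightarrow> has_xlogderiv (F * G) (Q + R)"
proof -
  assume "has_xlogderiv F Q" "has_xlogderiv G R"
  moreover have "fps_X * fps_deriv (F * G) = G * (fps_X * fps_deriv F) + F * (fps_X * fps_deriv G)"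
    by (simp add: fps_deriv_mult algebra_simps)
  ultimately show ?thesis
    unfolding has_xlogderiv_def by (simp add: algebra_simps)
qed

lemma has_xlogderiv_prod_list:
  "(\<And>x. has_xlogderiv (f x) (q x)) \<Longrightarrow> has_xlogderiv (\<Prod>x\<leftarrow>xs. f x) (\<Sum>x\<leftarrow>xs. q x)"
proof (induction xs)
  case Nil
  then show ?case by (simp add: has_xlogderiv_def)
next
  case (Cons x xs)
  then show ?case using has_xlogderiv_mult by fastforce
qed

lemma has_xlogderiv_geometric:
  "has_xlogderiv (fps_geometric c) (Abs_fps (\<lambda>k. if k = 0 then 0 else c ^ k))"
  unfolding has_xlogderiv_def
proof (rule fps_ext)
  fix n
  show "fps_nth (fps_X * fps_deriv (fps_geometric c)) n
      = fps_nth (fps_geometric c * Abs_fps (\<lambda>k. if k = 0 then 0 else c ^ k)) n"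
  proof (cases n)
    case (Suc m)
    have "fps_nth (fps_geometric c * Abs_fps (\<lambda>k. if k = 0 then 0 else c ^ k)) n
        = (\<Sum>i\<le>m. c ^ i * c ^ (Suc m - i))"
      by (simp add: Suc fps_geometric_def fps_mult_nth atLeast0AtMost sum.atMost_Suc)
    also have "\<dots> = (\<Sum>i\<le>m. c ^ Suc m)"
      by (intro sum.cong refl) (simp flip: power_add)
    finally show ?thesis
      by (simp add: Suc fps_geometric_def)
  qed (simp add: fps_geometric_def)
qed

lemma has_xlogderiv_linear:
  "has_xlogderiv (1 + fps_const c * fps_X)
     (Abs_fps (\<lambda>k. if k = 0 then 0 else (-1) ^ (k - 1) * c ^ k))"
  unfolding has_xlogderiv_def
proof (rule fps_ext)
  fix n
  let ?Q = "Abs_fps (\<lambda>k. if k = 0 then 0 else (-1) ^ (k - 1) * c ^ k)"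
  have "(1 + fps_const c * fps_X) * ?Q = ?Q + fps_X * (fps_const c * ?Q)"
    by (simp add: algebra_simps)
  then show "fps_nth (fps_X * fps_deriv (1 + fps_const c * fps_X)) n
      = fps_nth ((1 + fps_const c * fps_X) * ?Q) n"
    by (cases n; cases "n - 1") simp_all
qed

definition h_series :: "complex list \<Rightarrow> complex list \<Rightarrow> complex fps" where
  "h_series xs ys = (\<Prod>y\<leftarrow>ys. 1 + fps_const y * fps_X) * (\<Prod>x\<leftarrow>xs. fps_geometric x)"

lemma has_xlogderiv_h_series:
  "has_xlogderiv (h_series xs ys) (Abs_fps (\<lambda>k. if k = 0 then 0 else psum_ev xs ys k))"
proof -
  have "has_xlogderiv (h_series xs ys)
     ((\<Sum>y\<leftarrow>ys. Abs_fps (\<lambda>k. if k = 0 then 0 else (-1) ^ (k - 1) * y ^ k))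
      + (\<Sum>x\<leftarrow>xs. Abs_fps (\<lambda>k. if k = 0 then 0 else x ^ k)))"
    unfolding h_series_def
    by (intro has_xlogderiv_mult has_xlogderiv_prod_list has_xlogderiv_linear
        has_xlogderiv_geometric)
  moreover have "(\<Sum>y\<leftarrow>ys. Abs_fps (\<lambda>k. if k = 0 then 0 else (-1) ^ (k - 1) * y ^ k))
      + (\<Sum>x\<leftarrow>xs. Abs_fps (\<lambda>k. if k = 0 then 0 else x ^ k))
      = Abs_fps (\<lambda>k. if k = 0 then 0 else psum_ev xs ys k)"
  proof -
    have fps_nth_sum_list: "fps_nth (\<Sum>x\<leftarrow>zs. f x) k = (\<Sum>x\<leftarrow>zs. fps_nth (f x) k)"
      for f :: "complex \<Rightarrow> complex fps" and zs k
      by (induction zs) auto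
    show ?thesis
      by (rule fps_ext) (simp add: fps_nth_sum_list psum_ev_def sum_list_const_mult)
  qed
  ultimately show ?thesis
    by simp
qed

lemma length_hlist_ev: "length (hlist_ev xs ys n) = Suc n"
  by (induction n) auto

lemma nth_hlist_ev: "k \<le> n \<Longrightarrow> hlist_ev xs ys n ! k = h_ev xs ys k"
proof (induction n)
  case (Suc n)
  then show ?case
    by (cases "k = Suc n") (simp_all add: h_ev_def nth_append length_hlist_ev)
qed (simp add: h_ev_def)

lemma h_ev_Suc:
  "h_ev xs ys (Suc n) = (\<Sum>i=1..Suc n. psum_ev xs ys i * h_ev xs ys (Suc n - i)) / of_nat (Suc n)"
  unfolding h_ev_def[of _ _ "Suc n"]
  by (auto simp: nth_append length_hlist_ev nth_hlist_ev intro!: sum.cong arg_cong[where f = "\<lambda>x. x / _"])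

lemma fps_nth_h_series: "fps_nth (h_series xs ys) k = h_ev xs ys k"
proof (induction k rule: less_induct)
  case (less k)
  show ?case
  proof (cases k)
    case 0
    have "fps_nth (\<Prod>x\<leftarrow>zs. f x) 0 = (\<Prod>x\<leftarrow>zs. fps_nth (f x) 0)" for f :: "complex \<Rightarrow> complex fps" and zs
      by (induction zs) auto
    then show ?thesis
      using 0 by (simp add: h_series_def h_ev_def fps_geometric_def map_replicate_const)
  next
    case (Suc n)
    let ?T = "h_series xs ys" and ?p = "psum_ev xs ys"
    have "of_nat (Suc n) * fps_nth ?T (Suc n) = fps_nth (fps_X * fps_deriv ?T) (Suc n)"
      by simp
    also have "\<dots> = (\<Sum>i=0..Suc n. fps_nth ?T i * (if Suc n - i = 0 then 0 else ?p (Suc n - i)))"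
      using has_xlogderiv_h_series by (simp add: has_xlogderiv_def fps_mult_nth)
    also have "\<dots> = (\<Sum>i=0..n. h_ev xs ys i * ?p (Suc n - i))"
      using less Suc by (simp add: sum.atLeast0_atMost_Suc)
    also have "\<dots> = (\<Sum>i=1..Suc n. ?p i * h_ev xs ys (Suc n - i))"
      by (rule sum.reindex_bij_witness[of _ "\<lambda>i. Suc n - i" "\<lambda>i. Suc n - i"]) auto
    finally have "fps_nth ?T (Suc n) = (\<Sum>i=1..Suc n. ?p i * h_ev xs ys (Suc n - i)) / of_nat (Suc n)"
      by (simp add: eq_divide_eq mult.commute del: of_nat_Suc)
    then show ?thesis
      using Suc by (simp only: h_ev_Suc)
  qed
qed

lemma h_series_mult:
  "h_series xs ys * (\<Prod>x\<leftarrow>xs. 1 - fps_const x * fps_X) = (\<Prod>y\<leftarrow>ys. 1 + fps_const y * fps_X)"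
proof -
  have "(\<Prod>x\<leftarrow>xs. fps_geometric x) * (\<Prod>x\<leftarrow>xs. 1 - fps_const x * fps_X) = 1"
  proof (induction xs)
    case (Cons x xs)
    have "(\<Prod>x\<leftarrow>x # xs. fps_geometric x) * (\<Prod>x\<leftarrow>x # xs. 1 - fps_const x * fps_X)
        = (fps_geometric x * (1 - fps_const x * fps_X))
          * ((\<Prod>x\<leftarrow>xs. fps_geometric x) * (\<Prod>x\<leftarrow>xs. 1 - fps_const x * fps_X))"
      by (simp add: ac_simps)
    then show ?case
      using Cons by (simp add: fps_geometric_mult)
  qed simp
  then show ?thesis
    by (simp add: h_series_def mult.assoc)
qed

lemma prod_list_map_upt_Suc: "(\<Prod>i\<leftarrow>[1..<Suc n]. f i) = (\<Prod>i\<in>{1..n}. f i)"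
proof -
  have "(\<Prod>i\<leftarrow>[1..<Suc n]. f i) = prod f (set [1..<Suc n])"
    by (rule prod.distinct_set_conv_list[symmetric]) simp
  also have "set [1..<Suc n] = {1..n}"
    by auto
  finally show ?thesis .
qed

lemma fps_nth_prod_0: "fps_nth (\<Prod>i\<in>S. f i) 0 = (\<Prod>i\<in>S. fps_nth (f i) 0)"
  by (induction S rule: infinite_finite_induct) simp_all

section \<open>A linear functional on polynomials\<close>

definition fps_pairing :: "'a::comm_ring_1 fps \<Rightarrow> 'a poly \<Rightarrow> 'a" where
  "fps_pairing G F = (\<Sum>n\<le>degree F. coeff F n * fps_nth G (Suc n))"

lemma fps_pairing_eq_sum:
  "degree F < K \<Longrightarrow> fps_pairing G F = (\<Sum>n<K. coeff F n * fps_nth G (Suc n))"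
  unfolding fps_pairing_def by (rule sum.mono_neutral_left) (auto simp: coeff_eq_0)

lemma fps_pairing_add: "fps_pairing G (P + Q) = fps_pairing G P + fps_pairing G Q"
proof -
  have "degree (P + Q) < Suc (max (degree P) (degree Q))"
    using degree_add_le_max[of P Q] by simp
  then show ?thesis
    by (simp add: fps_pairing_eq_sum[where K = "Suc (max (degree P) (degree Q))"]
        sum.distrib algebra_simps)
qed

lemma fps_pairing_smult: "fps_pairing G (smult c F) = c * fps_pairing G F"
proof -
  have "degree (smult c F) < Suc (degree F)"
    using degree_smult_le[of c F] by simp
  then show ?thesis
    by (simp add: fps_pairing_eq_sum[where K = "Suc (degree F)"] sum_distrib_left mult.assoc
        del: sum.lessThan_Suc)
qed

lemma fps_pairing_0 [simp]: "fps_pairing G 0 = 0"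
  by (simp add: fps_pairing_def)

lemma fps_pairing_sum: "fps_pairing G (\<Sum>s\<in>S. f s) = (\<Sum>s\<in>S. fps_pairing G (f s))"
  by (induction S rule: infinite_finite_induct) (simp_all add: fps_pairing_add)

lemma fps_pairing_one: "fps_pairing 1 F = 0"
  by (simp add: fps_pairing_def)

lemma fps_pairing_linear_factor:
  "fps_pairing (fps_X * G) ([:- c, 1:] * F) = fps_pairing (G * (1 - fps_const c * fps_X)) F"
proof -
  define K where "K = Suc (degree F)"
  have "degree ([:- c, 1:] * F) < Suc K"
    unfolding K_def using degree_mult_le[of "[:- c, 1:]" F] by simp
  then have "fps_pairing (fps_X * G) ([:- c, 1:] * F)
      = (\<Sum>n<Suc K. coeff (smult (- c) F + pCons 0 F) n * fps_nth G n)"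
    by (simp add: fps_pairing_eq_sum mult_pCons_left del: sum.lessThan_Suc)
  also have "\<dots> = (\<Sum>n<Suc K. (- c) * coeff F n * fps_nth G n)
      + (\<Sum>n<Suc K. coeff (pCons 0 F) n * fps_nth G n)"
    by (simp only: coeff_add coeff_smult sum.distrib[symmetric] distrib_right)
  also have "(\<Sum>n<Suc K. coeff (pCons 0 F) n * fps_nth G n) = (\<Sum>n<K. coeff F n * fps_nth G (Suc n))"
    by (subst sum.lessThan_Suc_shift) simp
  also have "(\<Sum>n<Suc K. (- c) * coeff F n * fps_nth G n) = (\<Sum>n<K. (- c) * coeff F n * fps_nth G n)"
    by (simp add: K_def coeff_eq_0)
  also have "(\<Sum>n<K. (- c) * coeff F n * fps_nth G n) + (\<Sum>n<K. coeff F n * fps_nth G (Suc n))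
      = (\<Sum>n<K. coeff F n * fps_nth (G * (1 - fps_const c * fps_X)) (Suc n))"
  proof -
    have "G * (1 - fps_const c * fps_X) = G - fps_X * (fps_const c * G)"
      by (simp add: algebra_simps)
    then show ?thesis
      by (simp add: sum.distrib[symmetric] algebra_simps)
  qed
  also have "\<dots> = fps_pairing (G * (1 - fps_const c * fps_X)) F"
    by (rule fps_pairing_eq_sum[symmetric]) (simp add: K_def)
  finally show ?thesis .
qed

lemma fps_pairing_linear_factors:
  assumes "finite S"
  shows "fps_pairing (fps_X ^ card S * G) ((\<Prod>l\<in>S. [:- z l, 1:]) * F)
       = fps_pairing (G * (\<Prod>l\<in>S. 1 - fps_const (z l) * fps_X)) F"
  using assms
proof (induction S arbitrary: G rule: finite_induct)
  case (insert x S)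
  have "fps_pairing (fps_X ^ card (insert x S) * G) ((\<Prod>l\<in>insert x S. [:- z l, 1:]) * F)
      = fps_pairing (fps_X * (fps_X ^ card S * G)) ([:- z x, 1:] * ((\<Prod>l\<in>S. [:- z l, 1:]) * F))"
    using insert by (simp add: mult.assoc del: mult_pCons_left)
  also have "\<dots> = fps_pairing (fps_X ^ card S * (G * (1 - fps_const (z x) * fps_X)))
      ((\<Prod>l\<in>S. [:- z l, 1:]) * F)"
    by (simp only: fps_pairing_linear_factor mult.assoc)
  also have "\<dots> = fps_pairing (G * (1 - fps_const (z x) * fps_X) * (\<Prod>l\<in>S. 1 - fps_const (z l) * fps_X)) F"
    by (rule insert.IH)
  also have "\<dots> = fps_pairing (G * (\<Prod>l\<in>insert x S. 1 - fps_const (z l) * fps_X)) F"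
    using insert by (simp add: ac_simps)
  finally show ?case .
qed simp

lemma fps_pairing_geometric_vanishes:
  assumes "finite S"
  shows "fps_pairing (fps_X ^ card S * (\<Prod>l\<in>S. fps_geometric (z l))) ((\<Prod>l\<in>S. [:- z l, 1:]) * F) = 0"
  using assms
  by (simp add: fps_pairing_linear_factors fps_pairing_one fps_geometric_mult
      flip: prod.distrib)

lemma fps_pairing_mult_eq_sum_coeff:
  assumes "R = 0 \<or> degree R < K"
  shows "fps_pairing G (B * R) = (\<Sum>s<K. coeff R s * fps_pairing G (B * monom 1 s))"
proof -
  have R_eq: "(\<Sum>s<K. monom (coeff R s) s) = R"
    by (rule poly_eqI) (use assms in \<open>auto simp: coeff_sum coeff_monom coeff_eq_0\<close>)
  have monom_eq: "B * monom (coeff R s) s = smult (coeff R s) (B * monom 1 s)" for s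
    by (simp add: smult_monom flip: mult_smult_right)
  have "B * R = B * (\<Sum>s<K. monom (coeff R s) s)"
    by (simp only: R_eq)
  also have "\<dots> = (\<Sum>s<K. smult (coeff R s) (B * monom 1 s))"
    by (simp only: sum_distrib_left monom_eq)
  finally show ?thesis
    by (simp add: fps_pairing_sum fps_pairing_smult)
qed

lemma fps_pairing_low_degree:
  assumes "fps_nth H 0 = 1" and "degree P < M"
  shows "fps_pairing (fps_X ^ M * H) P = coeff P (M - 1)"
proof -
  obtain M' where M': "M = Suc M'"
    using assms(2) by (cases M) auto
  have "fps_pairing (fps_X ^ M * H) P = (\<Sum>n<Suc M'. coeff P n * fps_nth (fps_X ^ Suc M' * H) (Suc n))"
    using assms(2) M' by (simp add: fps_pairing_eq_sum del: sum.lessThan_Suc)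
  also have "\<dots> = coeff P M'"
    using assms(1) by (simp add: fps_X_power_mult_nth del: power_Suc)
  finally show ?thesis
    using M' by simp
qed

lemma prod_monom_0: "(\<Prod>j\<in>X. monom (c j) 0) = monom (\<Prod>j\<in>X. c j) 0"
  by (induction X rule: infinite_finite_induct) (simp_all add: mult_monom)

lemma coeff_prod_linear_factors:
  fixes b :: "'i \<Rightarrow> 'a::comm_ring_1"
  assumes "finite A"
  shows "coeff (\<Prod>j\<in>A. [:- b j, 1:]) s
       = (if s \<le> card A
          then (-1) ^ (card A - s) * (\<Sum>X\<in>{X. X \<subseteq> A \<and> card X = card A - s}. \<Prod>j\<in>X. b j)
          else 0)"
proof -
  have "(\<Prod>j\<in>A. [:- b j, 1:]) = (\<Prod>j\<in>A. monom (- b j) 0 + monom 1 1)"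
    by (intro prod.cong refl) (simp add: monom_0 monom_Suc)
  also have "\<dots> = (\<Sum>X\<in>Pow A. (\<Prod>j\<in>X. monom (- b j) 0) * (\<Prod>j\<in>A - X. monom 1 1))"
    by (rule prod_add[OF assms])
  also have "\<dots> = (\<Sum>X\<in>Pow A. monom ((-1) ^ card X * (\<Prod>j\<in>X. b j)) (card A - card X))"
  proof (intro sum.cong refl)
    fix X assume "X \<in> Pow A"
    then have "card (A - X) = card A - card X"
      using assms by (simp add: card_Diff_subset finite_subset)
    then show "(\<Prod>j\<in>X. monom (- b j) 0) * (\<Prod>j\<in>A - X. monom 1 1)
        = monom ((-1) ^ card X * (\<Prod>j\<in>X. b j)) (card A - card X)"
      by (simp add: prod_monom_0 prod_uminus monom_power mult_monom)
  qed
  also have "coeff \<dots> s = (\<Sum>X\<in>Pow A. if card X = card A - s \<and> s \<le> card A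
      then (-1) ^ (card A - s) * (\<Prod>j\<in>X. b j) else 0)"
  proof (unfold coeff_sum, intro sum.cong refl)
    fix X assume "X \<in> Pow A"
    then have "card X \<le> card A"
      using assms by (simp add: card_mono)
    then show "coeff (monom ((-1) ^ card X * (\<Prod>j\<in>X. b j)) (card A - card X)) s
        = (if card X = card A - s \<and> s \<le> card A then (-1) ^ (card A - s) * (\<Prod>j\<in>X. b j) else 0)"
      by (auto simp: coeff_monom)
  qed
  also have "\<dots> = (if s \<le> card A
          then (-1) ^ (card A - s) * (\<Sum>X\<in>{X. X \<subseteq> A \<and> card X = card A - s}. \<Prod>j\<in>X. b j)
          else 0)"
    using assms by (simp add: sum.inter_filter[symmetric] sum_distrib_left Pow_def)
  finally show ?thesis .
qed

lemma degree_prod_linear_factors: "degree (\<Prod>j\<in>S. [:- f j, 1::'a::idom:]) = card S"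
  by (cases "finite S") (simp_all add: degree_prod_eq_sum_degree)

lemma hfac_ev_eq_fps_pairing:
  "hfac_ev b (int (Suc n)) xs ys = fps_pairing (h_series xs ys) (\<Prod>j\<in>{1..n}. [:- b (int j), 1:])"
proof -
  have "fps_pairing (h_series xs ys) (\<Prod>j\<in>{1..n}. [:- b (int j), 1:])
      = (\<Sum>m<Suc n. (-1) ^ (n - m) * esym (n - m) n b * h_ev xs ys (Suc m))"
    by (simp add: fps_pairing_eq_sum[where K = "Suc n"] degree_prod_linear_factors
        coeff_prod_linear_factors fps_nth_h_series esym_def del: sum.lessThan_Suc)
  also have "\<dots> = (\<Sum>i=1..Suc n. (-1) ^ (Suc n - i) * esym (Suc n - i) n b * h_ev xs ys i)"
    by (rule sum.reindex_bij_witness[of _ "\<lambda>i. i - 1" Suc]) auto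
  also have "\<dots> = hfac_ev b (int (Suc n)) xs ys"
    by (simp add: hfac_ev_def del: of_nat_Suc)
  finally show ?thesis ..
qed

lemma prod_int_interval_split:
  fixes f :: "int \<Rightarrow> 'a::comm_monoid_mult"
  assumes "a \<le> b" "b \<le> c + 1"
  shows "prod f {a..c} = prod f {a..b - 1} * prod f {b..c}"
proof -
  have "{a..c} = {a..b - 1} \<union> {b..c}"
    using assms by auto
  then show ?thesis
    by (simp add: prod.union_disjoint)
qed

lemma prod_int_intervals_swap:
  fixes f :: "int \<Rightarrow> 'a::comm_monoid_mult"
  assumes "a \<le> b" "b \<le> c + 1" "b \<le> d + 1"
  shows "prod f {a..c} * prod f {b..d} = prod f {b..c} * prod f {a..d}"
  using prod_int_interval_split[of a b c f] prod_int_interval_split[of a b d f] assms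
  by (simp add: ac_simps)

lemma hfac_ev_shift_eq_fps_pairing:
  assumes T: "h_series xs ys = (\<Prod>m\<in>{1 - int M..0}. 1 - fps_const (a m) * fps_X) * H"
    and H0: "fps_nth H 0 = 1" and "j \<le> M" and "- int M \<le> \<kappa>"
  shows "hfac_ev (shift (1 - int (Suc j)) a) (\<kappa> + int (Suc j)) xs ys
       = fps_pairing (fps_X ^ M * H)
           ((\<Prod>m\<in>{1 - int j..0}. [:- a m, 1:]) * (\<Prod>m\<in>{1 - int M..\<kappa>}. [:- a m, 1:]))"
    (is "?h = fps_pairing _ (?B * ?D)")
proof (cases "\<kappa> + int j < 0")
  case True
  have "degree (?B * ?D) = j + nat (\<kappa> + int M)"
    by (simp add: degree_mult_eq degree_prod_linear_factors)
  then have deg_less: "degree (?B * ?D) < M"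
    and deg_eq_iff: "degree (?B * ?D) = M - 1 \<longleftrightarrow> \<kappa> + int (Suc j) = 0"
    using True assms(4) by linarith+
  have "lead_coeff (?B * ?D) = 1"
    by (simp add: lead_coeff_mult lead_coeff_prod)
  then have "coeff (?B * ?D) (M - 1) = (if \<kappa> + int (Suc j) = 0 then 1 else 0)"
    using deg_less deg_eq_iff by (auto simp: coeff_eq_0)
  then show ?thesis
    using True H0 deg_less by (simp add: fps_pairing_low_degree hfac_ev_def)
next
  case False
  define n where "n = nat (\<kappa> + int j)"
  have "\<kappa> + int (Suc j) = int (Suc n)"
    using False by (simp add: n_def)
  then have "?h = fps_pairing (h_series xs ys) (\<Prod>t\<in>{1..n}. [:- shift (1 - int (Suc j)) a (int t), 1:])"
    by (simp only: hfac_ev_eq_fps_pairing)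
  also have "(\<Prod>t\<in>{1..n}. [:- shift (1 - int (Suc j)) a (int t), 1:]) = (\<Prod>m\<in>{1 - int j..\<kappa>}. [:- a m, 1:])"
    using False
    by (intro prod.reindex_bij_witness[of _ "\<lambda>m. nat (m + int j)" "\<lambda>t. int t - int j"])
      (auto simp: n_def shift_def)
  also have "fps_pairing (h_series xs ys) \<dots>
      = fps_pairing (fps_X ^ card {1 - int M..0} * H)
          ((\<Prod>m\<in>{1 - int M..0}. [:- a m, 1:]) * (\<Prod>m\<in>{1 - int j..\<kappa>}. [:- a m, 1:]))"
    unfolding fps_pairing_linear_factors[OF finite_atLeastAtMost_int] T by (simp only: mult.commute)
  also have "(\<Prod>m\<in>{1 - int M..0}. [:- a m, 1:]) * (\<Prod>m\<in>{1 - int j..\<kappa>}. [:- a m, 1:]) = ?B * ?D"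
    using False assms(3) by (intro prod_int_intervals_swap) auto
  finally show ?thesis
    by simp
qed

section \<open>Frobenius coordinates\<close>

lemma part_antimono:
  assumes "young lam" and "1 \<le> i" "i \<le> j"
  shows "part lam j \<le> part lam i"
proof (cases "i < j \<and> j \<le> length lam")
  case True
  have "sorted_wrt (\<ge>) lam"
    using assms(1) by (simp add: young_def)
  moreover have "i - 1 < j - 1" "j - 1 < length lam"
    using True assms(2) by auto
  ultimately have "lam ! (j - 1) \<le> lam ! (i - 1)"
    by (rule sorted_wrt_nth_less)
  then show ?thesis
    using True assms(2) by (simp add: part_def)
qed (use assms(3) in \<open>auto simp: part_def\<close>)

lemma part_pos_imp_index: "0 < part lam i \<Longrightarrow> 1 \<le> i \<and> i \<le> length lam"
  by (auto simp: part_def split: if_splits)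

lemma le_diag_iff:
  assumes "young lam" and "1 \<le> i"
  shows "i \<le> diag lam \<longleftrightarrow> i \<le> part lam i"
proof -
  define S where "S = {i. 1 \<le> i \<and> i \<le> part lam i}"
  have diag_eq: "diag lam = card S"
    unfolding diag_def S_def by (metis part_pos_imp_index le_zero_eq not_gr0 not_one_le_zero)
  have "S = {1..diag lam}"
  proof (cases "S = {}")
    case False
    have fin: "finite S"
      unfolding S_def using part_pos_imp_index by (auto intro: finite_subset[of _ "{1..length lam}"])
    define m where "m = Max S"
    have "m \<in> S"
      using False fin by (simp add: m_def)
    have "S = {1..m}"
    proof
      show "S \<subseteq> {1..m}"
        using fin by (auto simp: m_def S_def)
      show "{1..m} \<subseteq> S"
        using \<open>m \<in> S\<close> part_antimono[OF assms(1)] by (fastforce simp: S_def)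
    qed
    then show ?thesis
      using diag_eq by simp
  qed (simp add: diag_eq)
  then have "i \<in> S \<longleftrightarrow> i \<in> {1..diag lam}"
    by simp
  then show ?thesis
    using assms(2) by (simp add: S_def)
qed

lemma diag_le_length: "diag lam \<le> length lam"
proof -
  have "diag lam \<le> card {1..length lam}"
    unfolding diag_def by (rule card_mono) auto
  then show ?thesis by simp
qed

lemma conjpart_le_length: "conjpart lam i \<le> length lam"
proof -
  have "conjpart lam i \<le> card {1..length lam}"
    unfolding conjpart_def by (rule card_mono) auto
  then show ?thesis by simp
qed

lemma conjpart_antimono: "i \<le> i' \<Longrightarrow> conjpart lam i' \<le> conjpart lam i"
  unfolding conjpart_def by (rule card_mono) auto

lemma le_conjpart:
  assumes "young lam" and "1 \<le> l" "1 \<le> i" "i \<le> part lam l"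
  shows "l \<le> conjpart lam i"
proof -
  have "l \<le> length lam"
    using part_pos_imp_index[of lam l] assms by simp
  then have "{1..l} \<subseteq> {j. 1 \<le> j \<and> j \<le> length lam \<and> i \<le> part lam j}"
    using part_antimono[OF assms(1)] assms(4) by (auto intro: order_trans)
  then have "card {1..l} \<le> conjpart lam i"
    unfolding conjpart_def by (rule card_mono[rotated]) auto
  then show ?thesis by simp
qed

lemma conjpart_less:
  assumes "young lam" and "1 \<le> l" "part lam l < i"
  shows "conjpart lam i < l"
proof -
  have "{j. 1 \<le> j \<and> j \<le> length lam \<and> i \<le> part lam j} \<subseteq> {1..<l}"
  proof
    fix j assume j: "j \<in> {j. 1 \<le> j \<and> j \<le> length lam \<and> i \<le> part lam j}"
    have "\<not> l \<le> j"
    proof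
      assume "l \<le> j"
      then have "part lam j \<le> part lam l"
        by (rule part_antimono[OF assms(1,2)])
      with j assms(3) show False by simp
    qed
    with j show "j \<in> {1..<l}" by simp
  qed
  then have "conjpart lam i \<le> card {1..<l}"
    unfolding conjpart_def by (rule card_mono[rotated]) auto
  then show ?thesis
    using assms(2) by simp
qed

(* In Frobenius notation x_index lam l = p_l + 1 and y_index lam i = -q_i, so that
   x(lambda)_l = a (x_index lam l) and y(lambda)_i = - a (y_index lam i). *)

definition x_index :: "nat list \<Rightarrow> nat \<Rightarrow> int" where
  "x_index lam l = int (part lam l) - int l + 1"

definition y_index :: "nat list \<Rightarrow> nat \<Rightarrow> int" where
  "y_index lam i = int i - int (conjpart lam i)"

lemma x_index_strict_antimono:
  "young lam \<Longrightarrow> 1 \<le> l \<Longrightarrow> l < l' \<Longrightarrow> x_index lam l' < x_index lam l"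
  using part_antimono[of lam l l'] by (simp add: x_index_def)

lemma x_index_antimono:
  "young lam \<Longrightarrow> 1 \<le> l \<Longrightarrow> l \<le> l' \<Longrightarrow> x_index lam l' \<le> x_index lam l"
  using x_index_strict_antimono[of lam l l'] by (cases "l = l'") auto

lemma inj_on_x_index:
  assumes "young lam" and "1 \<le> l"
  shows "inj_on (x_index lam) {l..}"
proof (rule inj_onI)
  fix u v assume "u \<in> {l..}" "v \<in> {l..}" "x_index lam u = x_index lam v"
  then show "u = v"
    using x_index_strict_antimono[OF assms(1), of u v] x_index_strict_antimono[OF assms(1), of v u] assms(2)
    by (cases u v rule: linorder_cases) auto
qed

lemma y_index_strict_mono: "1 \<le> i \<Longrightarrow> i < i' \<Longrightarrow> y_index lam i < y_index lam i'"
  using conjpart_antimono[of i i' lam] by (simp add: y_index_def)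

lemma one_le_x_index_iff: "young lam \<Longrightarrow> 1 \<le> l \<Longrightarrow> 1 \<le> x_index lam l \<longleftrightarrow> l \<le> diag lam"
  using le_diag_iff[of lam l] by (auto simp: x_index_def)

lemma y_index_nonpos: "young lam \<Longrightarrow> 1 \<le> i \<Longrightarrow> i \<le> diag lam \<Longrightarrow> y_index lam i \<le> 0"
  using le_diag_iff[of lam i] le_conjpart[of lam i i] by (simp add: y_index_def)

lemma x_index_neq_y_index:
  assumes "young lam" and "1 \<le> l" "1 \<le> i"
  shows "x_index lam l \<noteq> y_index lam i"
proof (cases "i \<le> part lam l")
  case True
  then show ?thesis
    using le_conjpart[OF assms] unfolding x_index_def y_index_def by linarith
next
  case False
  then show ?thesis
    using conjpart_less[OF assms(1,2), of i] unfolding x_index_def y_index_def by linarith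
qed

lemma inj_on_y_index: "inj_on (y_index lam) {1..}"
proof (rule inj_onI)
  fix u v assume "u \<in> {1..}" "v \<in> {1..}" "y_index lam u = y_index lam v"
  then show "u = v"
    using y_index_strict_mono[of u v lam] y_index_strict_mono[of v u lam]
    by (cases u v rule: linorder_cases) auto
qed

lemma y_index_image_disjoint_x_index_image:
  assumes "young lam"
  shows "y_index lam ` {1..} \<inter> x_index lam ` {1..} = {}"
  using x_index_neq_y_index[OF assms] by fastforce

text \<open>Frobenius complementarity, cf. Macdonald, Symmetric Functions, I.(1.7).\<close>

lemma y_index_Un_x_index:
  assumes "young lam" and "length lam \<le> M"
  shows "y_index lam ` {1..diag lam} \<union> x_index lam ` {Suc (diag lam)..M} = {1 - int M..0}"
proof (rule card_subset_eq)
  let ?d = "diag lam"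
  have "y_index lam ` {1..?d} \<subseteq> {1 - int M..0}"
  proof (rule image_subsetI)
    fix i assume i: "i \<in> {1..?d}"
    then have "y_index lam i \<le> 0"
      using y_index_nonpos[OF assms(1)] by simp
    moreover have "1 - int M \<le> y_index lam i"
      using i conjpart_le_length[of lam i] assms(2) by (simp add: y_index_def)
    ultimately show "y_index lam i \<in> {1 - int M..0}"
      by simp
  qed
  moreover have "x_index lam ` {Suc ?d..M} \<subseteq> {1 - int M..0}"
  proof (rule image_subsetI)
    fix l assume l: "l \<in> {Suc ?d..M}"
    then have "x_index lam l \<le> 0"
      using one_le_x_index_iff[OF assms(1), of l] by simp
    moreover have "1 - int M \<le> x_index lam l"
      using l by (simp add: x_index_def)
    ultimately show "x_index lam l \<in> {1 - int M..0}"
      by simp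
  qed
  ultimately show "y_index lam ` {1..?d} \<union> x_index lam ` {Suc ?d..M} \<subseteq> {1 - int M..0}"
    by blast
  have "card (y_index lam ` {1..?d}) = ?d"
    using inj_on_subset[OF inj_on_y_index] by (simp add: card_image subset_iff)
  moreover have "card (x_index lam ` {Suc ?d..M}) = M - ?d"
    using inj_on_subset[OF inj_on_x_index[OF assms(1), of 1]] by (simp add: card_image subset_iff)
  moreover have "y_index lam ` {1..?d} \<inter> x_index lam ` {Suc ?d..M} = {}"
    using y_index_image_disjoint_x_index_image[OF assms(1)] by fastforce
  moreover have "?d \<le> M"
    using diag_le_length[of lam] assms(2) by simp
  ultimately show "card (y_index lam ` {1..?d} \<union> x_index lam ` {Suc ?d..M}) = card {1 - int M..0}"
    by (simp add: card_Un_disjoint)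
qed simp

lemma prod_y_index_x_index:
  assumes "young lam" and "length lam \<le> M"
  shows "(\<Prod>i\<in>{1..diag lam}. f (y_index lam i)) * (\<Prod>l\<in>{Suc (diag lam)..M}. f (x_index lam l))
       = (\<Prod>m\<in>{1 - int M..0}. f m)"
proof -
  have "(\<Prod>i\<in>{1..diag lam}. f (y_index lam i)) * (\<Prod>l\<in>{Suc (diag lam)..M}. f (x_index lam l))
      = prod f (y_index lam ` {1..diag lam}) * prod f (x_index lam ` {Suc (diag lam)..M})"
    using inj_on_subset[OF inj_on_y_index] inj_on_subset[OF inj_on_x_index[OF assms(1), of 1]]
    by (simp add: prod.reindex subset_iff)
  also have "\<dots> = (\<Prod>m\<in>{1 - int M..0}. f m)"
    using y_index_image_disjoint_x_index_image[OF assms(1)]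
    by (subst y_index_Un_x_index[OF assms, symmetric], intro prod.union_disjoint[symmetric]) fastforce+
  finally show ?thesis .
qed

lemma xpt_eq_map_x_index:
  assumes "young lam"
  shows "xpt a lam = map (\<lambda>l. a (x_index lam l)) [1..<Suc (diag lam)]"
proof (unfold xpt_def, rule map_cong)
  fix l assume "l \<in> set [1..<Suc (diag lam)]"
  then have "l \<le> part lam l"
    using le_diag_iff[OF assms, of l] by auto
  then show "a (int (part lam l - l) + 1) = a (x_index lam l)"
    by (simp add: x_index_def of_nat_diff)
qed simp

lemma ypt_eq_map_y_index:
  assumes "young lam"
  shows "ypt a lam = map (\<lambda>i. - a (y_index lam i)) [1..<Suc (diag lam)]"
proof (unfold ypt_def, rule map_cong)
  fix i assume "i \<in> set [1..<Suc (diag lam)]"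
  then have "i \<le> conjpart lam i"
    using y_index_nonpos[OF assms, of i] by (auto simp: y_index_def)
  then show "dual_seq a (int (conjpart lam i - i) + 1) = - a (y_index lam i)"
    by (simp add: y_index_def dual_seq_def of_nat_diff)
qed simp

lemma h_series_frobenius:
  assumes "young lam" and "length lam \<le> M"
  shows "h_series (xpt a lam) (ypt a lam)
       = (\<Prod>m\<in>{1 - int M..0}. 1 - fps_const (a m) * fps_X) * (\<Prod>l\<in>{1..M}. fps_geometric (a (x_index lam l)))"
proof -
  let ?d = "diag lam" and ?T = "h_series (xpt a lam) (ypt a lam)"
  let ?L = "\<lambda>m. 1 - fps_const (a m) * fps_X"
  have T_mult: "?T * (\<Prod>l\<in>{1..?d}. ?L (x_index lam l)) = (\<Prod>i\<in>{1..?d}. ?L (y_index lam i))"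
    using h_series_mult[of "xpt a lam" "ypt a lam"]
    unfolding xpt_eq_map_x_index[OF assms(1)] ypt_eq_map_y_index[OF assms(1)] map_map prod_list_map_upt_Suc
    by (simp add: o_def flip: fps_const_neg)
  have "(\<Prod>l\<in>{1..M}. ?L (x_index lam l))
      = (\<Prod>l\<in>{1..?d}. ?L (x_index lam l)) * (\<Prod>l\<in>{Suc ?d..M}. ?L (x_index lam l))"
    using diag_le_length[of lam] assms(2) by (subst prod.union_disjoint[symmetric]) (auto intro: prod.cong)
  then have "?T * (\<Prod>l\<in>{1..M}. ?L (x_index lam l))
      = (\<Prod>i\<in>{1..?d}. ?L (y_index lam i)) * (\<Prod>l\<in>{Suc ?d..M}. ?L (x_index lam l))"
    by (simp only: T_mult mult.assoc[symmetric])
  also have "\<dots> = (\<Prod>m\<in>{1 - int M..0}. ?L m)"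
    by (rule prod_y_index_x_index[OF assms])
  finally have T_cancel: "?T * (\<Prod>l\<in>{1..M}. ?L (x_index lam l)) = (\<Prod>m\<in>{1 - int M..0}. ?L m)" .
  have "(\<Prod>l\<in>{1..M}. fps_geometric (a (x_index lam l))) * (\<Prod>l\<in>{1..M}. ?L (x_index lam l)) = 1"
    by (simp add: fps_geometric_mult flip: prod.distrib)
  then have "?T = ?T * (\<Prod>l\<in>{1..M}. ?L (x_index lam l)) * (\<Prod>l\<in>{1..M}. fps_geometric (a (x_index lam l)))"
    by (simp add: ac_simps)
  then show ?thesis
    by (simp only: T_cancel)
qed

section \<open>Vanishing of the Schur determinant\<close>

lemma det_zero_if_rows_in_span:
  fixes A :: "'a::comm_ring_1 mat"
  assumes A: "A \<in> carrier_mat n n" and "k < n"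
    and rows: "\<And>i j. i \<le> k \<Longrightarrow> j < n \<Longrightarrow> A $$ (i, j) = (\<Sum>s<k. C i s * V s j)"
  shows "det A = 0"
proof -
  define P where "P = mat n n (\<lambda>(i, s). if i \<le> k then (if s < k then C i s else 0)
                                     else (if s = i then 1 else 0))"
  define Q where "Q = mat\<^sub>r n n (\<lambda>s. if s = k then 0\<^sub>v n
                                    else if s < k then vec n (V s) else row A s)"
  have PQ: "A = P * Q"
  proof (rule eq_matI)
    fix i j assume "i < dim_row (P * Q)" "j < dim_col (P * Q)"
    then have i: "i < n" and j: "j < n"
      by (auto simp: P_def Q_def)
    have "(P * Q) $$ (i, j) = (\<Sum>s<n. P $$ (i, s) * Q $$ (s, j))"
      using i j by (simp add: P_def Q_def scalar_prod_def atLeast0LessThan)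
    also have "\<dots> = A $$ (i, j)"
    proof (cases "i \<le> k")
      case True
      have "(\<Sum>s<n. P $$ (i, s) * Q $$ (s, j)) = (\<Sum>s<k. C i s * V s j)"
        by (rule sum.mono_neutral_cong_right)
          (use i j True \<open>k < n\<close> in \<open>auto simp: P_def Q_def\<close>)
      then show ?thesis
        using rows[OF True j] by simp
    next
      case False
      have "(\<Sum>s<n. P $$ (i, s) * Q $$ (s, j)) = Q $$ (i, j)"
        using i False by (simp add: P_def sum.delta' if_distrib[of "\<lambda>x. x * _"] cong: if_cong)
      then show ?thesis
        using i j False A by (simp add: Q_def)
    qed
    finally show "A $$ (i, j) = (P * Q) $$ (i, j)" ..
  qed (use A in \<open>auto simp: P_def Q_def\<close>)
  have "det Q = 0"
    unfolding Q_def by (rule det_row_0[OF \<open>k < n\<close>]) (use A in auto)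
  moreover have "det (P * Q) = det P * det Q"
    by (rule det_mult[of _ n]) (simp_all add: P_def Q_def)
  ultimately show ?thesis
    using PQ by simp
qed

definition schur_matrix :: "nat list \<Rightarrow> (int \<Rightarrow> complex) \<Rightarrow> complex list \<Rightarrow> complex list \<Rightarrow> complex mat" where
  "schur_matrix \<mu> a xs ys =
     mat (length \<mu>) (length \<mu>)
       (\<lambda>(i, j). hfac_ev (shift (1 - int (Suc j)) a) (int (part \<mu> (Suc i)) - int (Suc i) + int (Suc j)) xs ys)"

lemma schur_ev_eq_det: "schur_ev \<mu> a xs ys = det (schur_matrix \<mu> a xs ys)"
  by (simp add: schur_ev_def schur_matrix_def)

lemma schur_matrix_entry:
  assumes "young lam" "length lam \<le> M" "length \<mu> \<le> M" "i < length \<mu>" "j < length \<mu>"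
  shows "schur_matrix \<mu> a (xpt a lam) (ypt a lam) $$ (i, j)
       = fps_pairing (fps_X ^ M * (\<Prod>l\<in>{1..M}. fps_geometric (a (x_index lam l))))
           ((\<Prod>m\<in>{1 - int j..0}. [:- a m, 1:])
            * (\<Prod>m\<in>{1 - int M..int (part \<mu> (Suc i)) - int (Suc i)}. [:- a m, 1:]))"
proof -
  have "schur_matrix \<mu> a (xpt a lam) (ypt a lam) $$ (i, j)
      = hfac_ev (shift (1 - int (Suc j)) a) ((int (part \<mu> (Suc i)) - int (Suc i)) + int (Suc j))
          (xpt a lam) (ypt a lam)"
    using assms(4,5) by (simp add: schur_matrix_def)
  also have "\<dots> = fps_pairing (fps_X ^ M * (\<Prod>l\<in>{1..M}. fps_geometric (a (x_index lam l))))
           ((\<Prod>m\<in>{1 - int j..0}. [:- a m, 1:])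
            * (\<Prod>m\<in>{1 - int M..int (part \<mu> (Suc i)) - int (Suc i)}. [:- a m, 1:]))"
    by (rule hfac_ev_shift_eq_fps_pairing[OF h_series_frobenius[OF assms(1,2)]])
      (use assms(3-5) in \<open>simp_all add: fps_nth_prod_0 fps_geometric_def\<close>)
  finally show ?thesis .
qed

lemma x_index_tail_subset:
  assumes "young \<mu>" "young lam" "part lam r < part \<mu> r" "1 \<le> r" "i < r"
  shows "x_index lam ` {r..M} \<subseteq> {1 - int M..int (part \<mu> (Suc i)) - int (Suc i)}"
proof (rule image_subsetI)
  fix l assume l: "l \<in> {r..M}"
  have "x_index lam l \<le> x_index lam r"
    using x_index_antimono[OF assms(2,4)] l by simp
  also have "\<dots> \<le> int (part \<mu> (Suc i)) - int (Suc i)"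
    using part_antimono[OF assms(1), of "Suc i" r] assms(3,5) by (simp add: x_index_def)
  finally show "x_index lam l \<in> {1 - int M..int (part \<mu> (Suc i)) - int (Suc i)}"
    using l by (simp add: x_index_def)
qed

lemma schur_matrix_entry_top_rows:
  assumes "young \<mu>" "young lam" "part lam r < part \<mu> r" "i < r" "j < length \<mu>"
  defines "M \<equiv> length \<mu> + length lam"
  shows "schur_matrix \<mu> a (xpt a lam) (ypt a lam) $$ (i, j)
       = fps_pairing (fps_X ^ (r - 1) * (\<Prod>l\<in>{1..<r}. fps_geometric (a (x_index lam l))))
           ((\<Prod>m\<in>{1 - int j..0}. [:- a m, 1:])
            * (\<Prod>m\<in>{1 - int M..int (part \<mu> (Suc i)) - int (Suc i)} - x_index lam ` {r..M}. [:- a m, 1:]))"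
proof -
  define \<kappa> where "\<kappa> = int (part \<mu> (Suc i)) - int (Suc i)"
  define z where "z l = a (x_index lam l)" for l
  define B where "B = (\<Prod>m\<in>{1 - int j..0}. [:- a m, 1:])"
  define D where "D = (\<Prod>m\<in>{1 - int M..\<kappa>}. [:- a m, 1:])"
  define E where "E = (\<Prod>m\<in>{1 - int M..\<kappa>} - x_index lam ` {r..M}. [:- a m, 1:])"
  have r: "1 \<le> r" "r \<le> length \<mu>"
    using part_pos_imp_index[of \<mu> r] assms(3) by auto
  then have "r \<le> M"
    by (simp add: M_def)
  have "x_index lam ` {r..M} \<subseteq> {1 - int M..\<kappa>}"
    unfolding \<kappa>_def by (rule x_index_tail_subset[OF assms(1-3) r(1) assms(4)])
  then have D_split: "D = (\<Prod>l\<in>{r..M}. [:- z l, 1:]) * E"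
    using inj_on_subset[OF inj_on_x_index[OF assms(2) r(1)]]
    by (simp add: D_def E_def z_def prod.subset_diff prod.reindex subset_iff mult.commute)
  have geometric_split: "(\<Prod>l\<in>{1..M}. fps_geometric (z l))
      = (\<Prod>l\<in>{1..<r}. fps_geometric (z l)) * (\<Prod>l\<in>{r..M}. fps_geometric (z l))"
    using r \<open>r \<le> M\<close> by (subst prod.union_disjoint[symmetric]) (auto intro: prod.cong)
  have X_split: "fps_X ^ M = fps_X ^ card {r..M} * (fps_X ^ (r - 1) :: complex fps)"
    using r \<open>r \<le> M\<close> by (simp flip: power_add)
  have "schur_matrix \<mu> a (xpt a lam) (ypt a lam) $$ (i, j)
      = fps_pairing (fps_X ^ M * (\<Prod>l\<in>{1..M}. fps_geometric (z l))) (B * D)"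
    using schur_matrix_entry[OF assms(2), of M \<mu> i j] assms(4,5) r by (simp add: M_def B_def D_def z_def \<kappa>_def)
  also have "\<dots> = fps_pairing (fps_X ^ card {r..M} * (fps_X ^ (r - 1) * (\<Prod>l\<in>{1..<r}. fps_geometric (z l))
        * (\<Prod>l\<in>{r..M}. fps_geometric (z l)))) ((\<Prod>l\<in>{r..M}. [:- z l, 1:]) * (B * E))"
    by (simp only: X_split D_split geometric_split ac_simps)
  also have "\<dots> = fps_pairing (fps_X ^ (r - 1) * (\<Prod>l\<in>{1..<r}. fps_geometric (z l))
        * (\<Prod>l\<in>{r..M}. fps_geometric (z l)) * (\<Prod>l\<in>{r..M}. 1 - fps_const (z l) * fps_X)) (B * E)"
    by (rule fps_pairing_linear_factors) simp
  also have "\<dots> = fps_pairing (fps_X ^ (r - 1) * (\<Prod>l\<in>{1..<r}. fps_geometric (z l))) (B * E)"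
    by (simp add: fps_geometric_mult mult.assoc flip: prod.distrib)
  finally show ?thesis
    by (simp add: B_def E_def z_def \<kappa>_def)
qed

lemma schur_matrix_top_rows_in_span:
  assumes "young \<mu>" "young lam" "part lam r < part \<mu> r"
  obtains C V where "\<And>i j. i < r \<Longrightarrow> j < length \<mu> \<Longrightarrow>
    schur_matrix \<mu> a (xpt a lam) (ypt a lam) $$ (i, j) = (\<Sum>s<r - 1. C i s * V s j)"
proof -
  define M where "M = length \<mu> + length lam"
  define G where "G = fps_X ^ (r - 1) * (\<Prod>l\<in>{1..<r}. fps_geometric (a (x_index lam l)))"
  define Z where "Z = (\<Prod>l\<in>{1..<r}. [:- a (x_index lam l), 1:])"
  define B where "B j = (\<Prod>m\<in>{1 - int j..0}. [:- a m, 1:])" for j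
  define E where "E i = (\<Prod>m\<in>{1 - int M..int (part \<mu> (Suc i)) - int (Suc i)} - x_index lam ` {r..M}.
    [:- a m, 1:])" for i
  have "Z \<noteq> 0" "degree Z = r - 1"
    by (simp_all add: Z_def degree_prod_linear_factors prod_zero_iff)
  have Z_vanishes: "fps_pairing G (Z * F) = 0" for F
    using fps_pairing_geometric_vanishes[of "{1..<r}" "\<lambda>l. a (x_index lam l)" F] by (simp add: G_def Z_def)
  have "schur_matrix \<mu> a (xpt a lam) (ypt a lam) $$ (i, j)
      = (\<Sum>s<r - 1. coeff (E i mod Z) s * fps_pairing G (B j * monom 1 s))"
    if "i < r" "j < length \<mu>" for i j
  proof -
    have "schur_matrix \<mu> a (xpt a lam) (ypt a lam) $$ (i, j) = fps_pairing G (B j * E i)"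
      using schur_matrix_entry_top_rows[OF assms that] by (simp add: G_def B_def E_def M_def)
    also have "B j * E i = B j * (E i div Z * Z + E i mod Z)"
      by simp
    also have "\<dots> = Z * (B j * (E i div Z)) + B j * (E i mod Z)"
      by (simp only: distrib_left mult.commute mult.left_commute)
    also have "fps_pairing G \<dots> = fps_pairing G (B j * (E i mod Z))"
      by (simp add: fps_pairing_add Z_vanishes)
    also have "\<dots> = (\<Sum>s<r - 1. coeff (E i mod Z) s * fps_pairing G (B j * monom 1 s))"
      using degree_mod_less[OF \<open>Z \<noteq> 0\<close>, of "E i"] \<open>degree Z = r - 1\<close>
      by (intro fps_pairing_mult_eq_sum_coeff) simp
    finally show ?thesis .
  qed
  then show ?thesis
    by (rule that)
qed

theorem theorem10:
  fixes a :: "int \<Rightarrow> complex" and \<mu> lam :: "nat list"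
  assumes "young \<mu>" and "young lam" and "\<not> diagram_subset \<mu> lam"
  shows "schur_ev \<mu> a (xpt a lam) (ypt a lam) = 0"
proof -
  obtain r where r: "part lam r < part \<mu> r"
    using assms(3) by (auto simp: diagram_subset_def not_le)
  then have "1 \<le> r" "r \<le> length \<mu>"
    using part_pos_imp_index[of \<mu> r] by auto
  obtain C V where rows: "\<And>i j. i < r \<Longrightarrow> j < length \<mu> \<Longrightarrow>
      schur_matrix \<mu> a (xpt a lam) (ypt a lam) $$ (i, j) = (\<Sum>s<r - 1. C i s * V s j)"
    using schur_matrix_top_rows_in_span[OF assms(1,2) r] by blast
  have "det (schur_matrix \<mu> a (xpt a lam) (ypt a lam)) = 0"
    by (rule det_zero_if_rows_in_span[where k = "r - 1" and C = C and V = V])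
      (use \<open>1 \<le> r\<close> \<open>r \<le> length \<mu>\<close> rows in \<open>auto simp: schur_matrix_def\<close>)
  then show ?thesis
    by (simp add: schur_ev_eq_det)
qed

end
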